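(* Let $V=\{n\in\mathbb{Z} : n\geq 2,\ 5\nmid n\}$ and let $\Gamma_5$ be the directed graph on $V$ with up-edges $(n,(n+5)^2)$ and down-edges $(n^2,n)$ for $n\in V$. Let $B$ be a square-to-square conveyor belt path in $\Gamma_5$ consisting of fewer than $150$ steps, i.e. of the form $(UD)^i$ with $1\leq i<75$. (a) If the vertices $v_0,v_1,\dots,v_i$ of $B$ are congruent to $1$ modulo $5$, then its endpoint $v_i$ is at most $91^2$. (b) If these vertices are congruent to $4$ modulo $5$, then its endpoint $v_i$ is at most $183^2$.
   Context: A conveyor belt is a path in $\Gamma_5$ whose edge labels are $UD\,UD\cdots UD$ ($U$ = up-edge, $D$ = down-edge), i.e. $(UD)^i$ for some $i\geq 1$; it has $2i$ steps. Each $UD$ step takes a vertex $v$ to $(v+5)^2$ and then to $v+5$, so the belt visits $v_0, (v_0+5)^2, v_0+5, \dots$; write $v_j=v_0+5j$ for the vertices reached after each $UD$ step, so it begins at $v_0$ and ends at $v_i=v_0+5i$, and all $v_j$ are congruent modulo $5$. A conveyor belt is square-to-square if both its starting vertex $v_0$ and its ending vertex $v_i$ are perfect squares. *)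

theory Defs
  imports Main
begin

definition V5 :: "int set" where
  "V5 = {n. n \<ge> 2 \<and> \<not> (5 dvd n)}"

definition up_edge :: "int \<Rightarrow> int \<Rightarrow> bool" where
  "up_edge a b \<longleftrightarrow> a \<in> V5 \<and> b = (a + 5)^2"

definition down_edge :: "int \<Rightarrow> int \<Rightarrow> bool" where
  "down_edge a b \<longleftrightarrow> b \<in> V5 \<and> a = b^2"

definition conveyor_belt :: "int list \<Rightarrow> nat \<Rightarrow> bool" where
  "conveyor_belt w i \<longleftrightarrow> i \<ge> 1 \<and> length w = 2 * i + 1 \<and> (\<forall>x \<in> set w. x \<in> V5) \<and>
     (\<forall>k < 2 * i. (even k \<longrightarrow> up_edge (w ! k) (w ! (k + 1))) \<and>
                  (odd k \<longrightarrow> down_edge (w ! k) (w ! (k + 1))))"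

definition is_square :: "int \<Rightarrow> bool" where
  "is_square n \<longleftrightarrow> (\<exists>m. n = m^2)"

definition square_to_square :: "int list \<Rightarrow> nat \<Rightarrow> bool" where
  "square_to_square w i \<longleftrightarrow> conveyor_belt w i \<and> is_square (w ! 0) \<and> is_square (w ! (2 * i))"

end

theory Submission
  imports Defs
begin

text \<open>Along a conveyor belt the vertices at even positions form the arithmetic progression
  \<open>v\<^sub>0, v\<^sub>0 + 5, \<dots>\<close>, so a square-to-square belt with \<open>i\<close> blocks gives squares \<open>a\<^sup>2 < b\<^sup>2\<close>
  with \<open>b\<^sup>2 - a\<^sup>2 = 5i \<le> 370\<close>. Writing \<open>b\<^sup>2 - a\<^sup>2 = (b - a)(b + a)\<close>, already \<open>b - a \<ge> 1\<close>
  gives \<open>2b - 1 \<le> 370\<close>, i.e. \<open>b \<le> 185\<close>; for \<open>b \<equiv> \<plusminus>2 (mod 5)\<close> this leaves \<open>b \<le> 183\<close>.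
  For \<open>b \<equiv> \<plusminus>1 (mod 5)\<close> the gap \<open>b - a = 1\<close> is impossible, since then \<open>2b - 1 \<equiv> 0\<close>
  forces \<open>b \<equiv> 3\<close>; so \<open>b - a \<ge> 2\<close>, whence \<open>4b - 4 \<le> 370\<close>, \<open>b \<le> 93\<close> and finally \<open>b \<le> 91\<close>.\<close>

lemma conveyor_belt_even_step:
  assumes belt: "conveyor_belt w i" and "j < i"
  shows "w ! (2 * j + 2) = w ! (2 * j) + 5"
proof -
  have "up_edge (w ! (2 * j)) (w ! (2 * j + 1))"
    using belt \<open>j < i\<close> unfolding conveyor_belt_def by force
  moreover have "down_edge (w ! (2 * j + 1)) (w ! (2 * j + 1 + 1))"
    using belt \<open>j < i\<close> unfolding conveyor_belt_def by force
  ultimately have "(w ! (2 * j + 2))\<^sup>2 = (w ! (2 * j) + 5)\<^sup>2"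
    and "w ! (2 * j + 2) \<ge> 0" "w ! (2 * j) + 5 \<ge> 0"
    unfolding up_edge_def down_edge_def V5_def by auto
  then show ?thesis
    by (simp add: power2_eq_iff_nonneg)
qed

lemma conveyor_belt_even_vertex:
  assumes belt: "conveyor_belt w i" and "j \<le> i"
  shows "w ! (2 * j) = w ! 0 + 5 * int j"
  using \<open>j \<le> i\<close>
proof (induction j)
  case 0
  then show ?case by simp
next
  case (Suc j)
  then show ?case
    using conveyor_belt_even_step[OF belt, of j] by simp
qed

lemma is_square_nonneg_root:
  assumes "is_square n"
  obtains r :: int where "0 \<le> r" "n = r\<^sup>2"
  using assms unfolding is_square_def by (metis abs_ge_zero power2_abs)

lemma square_diff_lower_bound:
  fixes a b k :: int
  assumes "0 \<le> a" "0 \<le> k" "k \<le> b - a"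
  shows "k * (2 * b - k) \<le> b\<^sup>2 - a\<^sup>2"
proof -
  have "b\<^sup>2 - a\<^sup>2 - k * (2 * b - k) = (b - a - k) * (b + a - k)"
    by (simp add: power2_eq_square algebra_simps)
  also have "\<dots> \<ge> 0"
    using assms by simp
  finally show ?thesis by simp
qed

lemma int_square_mod_5_eq_1:
  fixes b :: int
  assumes "b\<^sup>2 mod 5 = 1"
  shows "b mod 5 = 1 \<or> b mod 5 = 4"
proof -
  have "b mod 5 \<in> {0, 1, 2, 3, 4}" by auto
  then show ?thesis
    using assms power_mod[of b 5 2] by auto
qed

lemma int_square_mod_5_eq_4:
  fixes b :: int
  assumes "b\<^sup>2 mod 5 = 4"
  shows "b mod 5 = 2 \<or> b mod 5 = 3"
proof -
  have "b mod 5 \<in> {0, 1, 2, 3, 4}" by auto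
  then show ?thesis
    using assms power_mod[of b 5 2] by auto
qed

lemma square_gap_mod_5_eq_1_bound:
  fixes a b m :: int
  assumes "0 \<le> a" "a < b" "b\<^sup>2 = a\<^sup>2 + 5 * m" "b\<^sup>2 mod 5 = 1"
  shows "4 * b \<le> 5 * m + 4"
proof -
  have "b - a \<noteq> 1"
  proof
    assume "b - a = 1"
    then have "2 * b - 1 = 5 * m"
      using \<open>b\<^sup>2 = a\<^sup>2 + 5 * m\<close> by (simp add: power2_eq_square algebra_simps)
    then have "b mod 5 = 3" by presburger
    then show False
      using int_square_mod_5_eq_1[OF \<open>b\<^sup>2 mod 5 = 1\<close>] by simp
  qed
  then have "2 * (2 * b - 2) \<le> b\<^sup>2 - a\<^sup>2"
    using square_diff_lower_bound[of a 2 b] \<open>0 \<le> a\<close> \<open>a < b\<close> by simp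
  then show ?thesis
    using \<open>b\<^sup>2 = a\<^sup>2 + 5 * m\<close> by simp
qed

theorem lemma11:
  fixes w :: "int list" and i :: nat
  assumes "square_to_square w i"
    and "1 \<le> i" and "i < 75"
  shows "((\<forall>j \<le> i. w ! (2 * j) mod 5 = 1) \<longrightarrow> w ! (2 * i) \<le> 91^2) \<and>
         ((\<forall>j \<le> i. w ! (2 * j) mod 5 = 4) \<longrightarrow> w ! (2 * i) \<le> 183^2)"
proof -
  have belt: "conveyor_belt w i" and "is_square (w ! 0)" "is_square (w ! (2 * i))"
    using assms(1) unfolding square_to_square_def by simp_all
  then obtain a b where "0 \<le> a" "w ! 0 = a\<^sup>2" and "0 \<le> b" and b: "w ! (2 * i) = b\<^sup>2"
    by (metis is_square_nonneg_root)
  then have gap: "b\<^sup>2 = a\<^sup>2 + 5 * int i"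
    using conveyor_belt_even_vertex[OF belt, of i] by simp
  then have "a\<^sup>2 < b\<^sup>2"
    using \<open>1 \<le> i\<close> by simp
  then have "a < b"
    using \<open>0 \<le> b\<close> by (rule power_less_imp_less_base)
  show ?thesis
  proof (intro conjI impI)
    assume "\<forall>j \<le> i. w ! (2 * j) mod 5 = 1"
    then have "b\<^sup>2 mod 5 = 1" using b by force
    then have "4 * b \<le> 5 * int i + 4" "b mod 5 = 1 \<or> b mod 5 = 4"
      using square_gap_mod_5_eq_1_bound \<open>0 \<le> a\<close> \<open>a < b\<close> gap int_square_mod_5_eq_1 by auto
    then have "b \<le> 91" using \<open>i < 75\<close> by presburger
    then show "w ! (2 * i) \<le> 91^2"
      unfolding b using \<open>0 \<le> b\<close> by (rule power_mono)
  next
    assume "\<forall>j \<le> i. w ! (2 * j) mod 5 = 4"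
    then have "b\<^sup>2 mod 5 = 4" using b by force
    then have "2 * b - 1 \<le> 5 * int i" "b mod 5 = 2 \<or> b mod 5 = 3"
      using square_diff_lower_bound[of a 1 b] \<open>0 \<le> a\<close> \<open>a < b\<close> gap int_square_mod_5_eq_4 by auto
    then have "b \<le> 183" using \<open>i < 75\<close> by presburger
    then show "w ! (2 * i) \<le> 183^2"
      unfolding b using \<open>0 \<le> b\<close> by (rule power_mono)
  qed
qed

end
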